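(* Let $m\in\mathbb{N}$, $q\in[0.5,1)$, and weights $w_1,\ldots,w_m\ge 0$ with $\sum_j w_j>0$. Let $\mu_1,\ldots,\mu_m,\tilde\epsilon_1,\ldots,\tilde\epsilon_m$ be mutually independent real random variables, where $\tilde\epsilon_1,\ldots,\tilde\epsilon_m$ have finite means and variances and $\mu_1,\ldots,\mu_m$ have one common bounded probability density. For $t>0$ set $\lambda_i^t=t\mu_i+\tilde\epsilon_i$. Let $v$ be the weighted voting game $[q^m;w_1,\ldots,w_m]$ and $\phi(v)$ its Shapley value. Then for $i,j\in\{1,\ldots,m\}$ with $\phi_j(v)>0$, $$\lim_{t\to\infty}\frac{\pi_i(\mathcal{R}^{m,q,t})}{\pi_j(\mathcal{R}^{m,q,t})}=\frac{\phi_i(v)}{\phi_j(v)}.$$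
   Context: The quota is $q^m=q\sum_{j=1}^m w_j$. For a realization of $\lambda_1^t,\ldots,\lambda_m^t$ (ties ignored), let $k{:}m$ be the index of the representative with the $k$-th smallest ideal point and $w_{k:m}$ its weight; the pivotal position is $P=\min\{j:\sum_{k=1}^j w_{k:m}>q^m\}$, and $\pi_i(\mathcal{R}^{m,q,t})=\Pr(P{:}m=i)$ when ideal points are $\lambda^t_1,\ldots,\lambda^t_m$. The weighted voting game $[q^m;w_1,\ldots,w_m]$ is the simple game on $\{1,\ldots,m\}$ with $v(S)=1$ if $\sum_{j\in S}w_j>q^m$ and $v(S)=0$ otherwise. Its Shapley value is $\phi_i(v)=\sum_{S\subseteq\{1,\ldots,m\}\setminus\{i\}}\frac{|S|!(m-|S|-1)!}{m!}[v(S\cup\{i\})-v(S)]$. *)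

theory Defs
  imports "HOL-Probability.Probability"
begin

definition quota :: "nat \<Rightarrow> real \<Rightarrow> (nat \<Rightarrow> real) \<Rightarrow> real" where
  "quota m q w = q * (\<Sum>j=1..m. w j)"

text \<open>For a realization x of the ideal points without ties, representative i is pivotal:
  sigma lists the representatives in increasing order of ideal points (sigma k = k:m),
  P is the least position whose cumulative weight exceeds the quota, and i = P:m.\<close>
definition pivotal :: "nat \<Rightarrow> real \<Rightarrow> (nat \<Rightarrow> real) \<Rightarrow> (nat \<Rightarrow> real) \<Rightarrow> nat \<Rightarrow> bool" where
  "pivotal m q w x i \<longleftrightarrow> inj_on x {1..m} \<and>
     (\<exists>\<sigma>. bij_betw \<sigma> {1..m} {1..m} \<and> strict_mono_on {1..m} (x \<circ> \<sigma>) \<and>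
        \<sigma> (LEAST P. (\<Sum>k=1..P. w (\<sigma> k)) > quota m q w) = i)"

definition pivot_prob ::
  "'a measure \<Rightarrow> nat \<Rightarrow> real \<Rightarrow> (nat \<Rightarrow> real) \<Rightarrow> (nat \<Rightarrow> 'a \<Rightarrow> real) \<Rightarrow> (nat \<Rightarrow> 'a \<Rightarrow> real)
     \<Rightarrow> real \<Rightarrow> nat \<Rightarrow> real" where
  "pivot_prob M m q w \<mu> \<epsilon> t i =
     measure M {\<omega> \<in> space M. pivotal m q w (\<lambda>k. t * \<mu> k \<omega> + \<epsilon> k \<omega>) i}"

definition wvg :: "nat \<Rightarrow> real \<Rightarrow> (nat \<Rightarrow> real) \<Rightarrow> nat set \<Rightarrow> real" where
  "wvg m q w S = (if (\<Sum>j\<in>S. w j) > quota m q w then 1 else 0)"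

definition shapley :: "nat \<Rightarrow> (nat set \<Rightarrow> real) \<Rightarrow> nat \<Rightarrow> real" where
  "shapley m v i = (\<Sum>S\<in>Pow ({1..m} - {i}).
      fact (card S) * fact (m - card S - 1) / fact m * (v (S \<union> {i}) - v S))"

end

theory Submission
  imports Defs
begin

(* For t \<rightarrow> \<infinity> the ideal points t*mu_k + eps_k are eventually ordered like the shocks mu_k,
   almost surely (the mu_k have a density, hence no ties).  So pi_i(R^{m,q,t}) converges to the
   probability that i is pivotal for the ideal points mu_1..mu_m, and it suffices to show that this
   probability is the Shapley value phi_i(v); the theorem follows by taking the quotient of limits. *)

definition below :: "nat set \<Rightarrow> (nat \<Rightarrow> real) \<Rightarrow> nat \<Rightarrow> nat set" where
  "below N x a = {b\<in>N. x b < x a}"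

lemma below_subset: "below N x a \<subseteq> N"
  unfolding below_def by auto

lemma card_below_less:
  assumes "finite N" "a \<in> N" "b \<in> N" "x a < x b"
  shows "card (below N x a) < card (below N x b)"
proof -
  have "below N x a \<subset> below N x b" using assms by (auto simp: below_def)
  then show ?thesis using assms(1) by (intro psubset_card_mono) (auto simp: below_def)
qed

lemma card_below_less_iff:
  assumes "finite N" "inj_on x N" "a \<in> N" "b \<in> N"
  shows "card (below N x a) < card (below N x b) \<longleftrightarrow> x a < x b"
  using card_below_less[OF assms(1,3,4)] card_below_less[OF assms(1,4,3)] inj_onD[OF assms(2) _ assms(3,4)]
  by (metis less_asym' linorder_neqE_linordered_idom)

lemma rank_bij:
  assumes "finite N" "inj_on x N"
  shows "bij_betw (\<lambda>a. card (below N x a)) N {0..<card N}"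
proof -
  have inj: "inj_on (\<lambda>a. card (below N x a)) N"
  proof (rule inj_onI)
    fix a b assume ab: "a \<in> N" "b \<in> N" "card (below N x a) = card (below N x b)"
    then have "\<not> x a < x b" "\<not> x b < x a"
      using card_below_less_iff[OF assms] by (metis less_irrefl)+
    then show "a = b" using inj_onD[OF assms(2) _ ab(1,2)] by simp
  qed
  have "card (below N x a) < card N" if "a \<in> N" for a
    using that assms(1) by (intro psubset_card_mono) (auto simp: below_def)
  then have sub: "(\<lambda>a. card (below N x a)) ` N \<subseteq> {0..<card N}" by auto
  have "card ((\<lambda>a. card (below N x a)) ` N) = card {0..<card N}"
    using card_image[OF inj] by simp
  then show ?thesis
    using inj sub card_subset_eq[OF _ sub] unfolding bij_betw_def by simp
qed

(* Without ties, {1..m} can be listed in increasing order of ideal points: the permutation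
   sigma of the definition of pivotal exists; it inverts the shifted rank. *)
lemma sorting_exists:
  fixes x :: "nat \<Rightarrow> real"
  assumes inj: "inj_on x {1..m}"
  obtains \<sigma> where "bij_betw \<sigma> {1..m} {1..m}" "strict_mono_on {1..m} (x \<circ> \<sigma>)"
proof -
  let ?N = "{1..m}"
  define \<rho> where "\<rho> a = Suc (card (below ?N x a))" for a
  have "bij_betw (\<lambda>a. card (below ?N x a)) ?N {0..<m}"
    using rank_bij[OF _ inj] by simp
  moreover have "bij_betw Suc {0..<m} ?N"
    by (simp add: bij_betw_def image_Suc_atLeastLessThan atLeastLessThanSuc_atLeastAtMost)
  ultimately have "bij_betw (Suc \<circ> (\<lambda>a. card (below ?N x a))) ?N ?N"
    by (rule bij_betw_trans)
  then have bij\<rho>: "bij_betw \<rho> ?N ?N" unfolding \<rho>_def comp_def .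
  define \<sigma> where "\<sigma> = the_inv_into ?N \<rho>"
  have bij\<sigma>: "bij_betw \<sigma> ?N ?N"
    unfolding \<sigma>_def by (rule bij_betw_the_inv_into[OF bij\<rho>])
  have "strict_mono_on ?N (x \<circ> \<sigma>)"
  proof (rule strict_mono_onI)
    fix r s assume rs: "r \<in> ?N" "s \<in> ?N" "r < s"
    have "\<rho> (\<sigma> r) = r" "\<rho> (\<sigma> s) = s"
      unfolding \<sigma>_def using f_the_inv_into_f_bij_betw[OF bij\<rho>] rs by auto
    moreover have "\<sigma> r \<in> ?N" "\<sigma> s \<in> ?N" using bij_betw_apply[OF bij\<sigma>] rs by auto
    ultimately show "(x \<circ> \<sigma>) r < (x \<circ> \<sigma>) s"
      using card_below_less_iff[OF _ inj, of "\<sigma> r" "\<sigma> s"] rs unfolding \<rho>_def by simp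
  qed
  then show ?thesis using bij\<sigma> that by blast
qed

lemma below_sorted:
  fixes x :: "nat \<Rightarrow> real"
  assumes bij: "bij_betw \<sigma> {1..m} {1..m}" and mono: "strict_mono_on {1..m} (x \<circ> \<sigma>)"
    and k: "k \<in> {1..m}"
  shows "below {1..m} x (\<sigma> k) = \<sigma> ` {1..<k}"
proof -
  have less_iff: "x (\<sigma> j) < x (\<sigma> k) \<longleftrightarrow> j < k" if "j \<in> {1..m}" for j
    using strict_mono_on_less[OF mono that k] by simp
  have "below {1..m} x (\<sigma> k) = {b \<in> \<sigma> ` {1..m}. x b < x (\<sigma> k)}"
    using bij by (simp add: below_def bij_betw_def)
  also have "\<dots> = \<sigma> ` {j \<in> {1..m}. j < k}" using less_iff by auto
  also have "{j \<in> {1..m}. j < k} = {1..<k}" using k by auto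
  finally show ?thesis .
qed

lemma below_restrict: "a \<in> N \<Longrightarrow> below N (restrict x N) a = below N x a"
  unfolding below_def by auto

lemma below_permute:
  assumes \<pi>: "bij_betw \<pi> N N" and a: "a \<in> N" and S: "S \<subseteq> N"
  shows "inj_on (x \<circ> \<pi>) N \<and> below N (x \<circ> \<pi>) a = S \<longleftrightarrow> inj_on x N \<and> below N x (\<pi> a) = \<pi> ` S"
proof -
  have inj\<pi>: "inj_on \<pi> N" and img: "\<pi> ` N = N" using \<pi> by (auto simp: bij_betw_def)
  have "inj_on (x \<circ> \<pi>) N \<longleftrightarrow> inj_on x N" using comp_inj_on_iff[OF inj\<pi>, of x] img by simp
  moreover have "below N x (\<pi> a) = \<pi> ` below N (x \<circ> \<pi>) a"
    using img unfolding below_def by auto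
  moreover have "\<pi> ` below N (x \<circ> \<pi>) a = \<pi> ` S \<longleftrightarrow> below N (x \<circ> \<pi>) a = S"
    using inj_on_image_eq_iff[OF inj\<pi> below_subset S] .
  ultimately show ?thesis by simp
qed

lemma exists_permutation:
  assumes fin: "finite N" and a: "a \<in> N" and b: "b \<in> N"
    and S: "S \<subseteq> N - {a}" and T: "T \<subseteq> N - {b}" and card: "card S = card T"
  obtains \<pi> where "bij_betw \<pi> N N" "\<pi> a = b" "\<pi> ` S = T"
proof -
  have fST: "finite S" "finite T" using S T fin finite_subset by blast+
  obtain g where g: "bij_betw g S T" using finite_same_card_bij[OF fST card] by blast
  let ?R = "N - insert a S" and ?R' = "N - insert b T"
  have aS: "a \<notin> S" and bT: "b \<notin> T" using S T by auto
  have "card ?R = card N - card (insert a S)" "card ?R' = card N - card (insert b T)"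
    using S T fST a b by (auto intro!: card_Diff_subset)
  then have "card ?R = card N - Suc (card S)" "card ?R' = card N - Suc (card T)"
    using fST aS bT by simp_all
  then obtain h where h: "bij_betw h ?R ?R'"
    using finite_same_card_bij[of ?R ?R'] fin card by auto
  define \<pi> where "\<pi> c = (if c \<in> S then g c else if c = a then b else h c)" for c
  have on_S: "bij_betw \<pi> S T"
    using g by (rule bij_betw_cong[THEN iffD1, rotated]) (simp add: \<pi>_def)
  have on_a: "bij_betw \<pi> {a} {b}" using aS by (simp add: \<pi>_def)
  have on_R: "bij_betw \<pi> ?R ?R'"
    using h by (rule bij_betw_cong[THEN iffD1, rotated]) (simp add: \<pi>_def)
  have "bij_betw \<pi> ({a} \<union> ?R) ({b} \<union> ?R')"
    by (rule bij_betw_combine[OF on_a on_R]) simp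
  then have "bij_betw \<pi> (S \<union> ({a} \<union> ?R)) (T \<union> ({b} \<union> ?R'))"
    by (rule bij_betw_combine[OF on_S]) (use T in blast)
  moreover have "S \<union> ({a} \<union> ?R) = N" "T \<union> ({b} \<union> ?R') = N" using S T a b by auto
  moreover have "\<pi> a = b" using aS by (simp add: \<pi>_def)
  moreover have "\<pi> ` S = T" using on_S by (simp add: bij_betw_def)
  ultimately show ?thesis using that by simp
qed

lemma least_threshold:
  fixes g :: "nat \<Rightarrow> real" and Q :: real
  assumes g: "\<And>k. k \<in> {1..m} \<Longrightarrow> 0 \<le> g k" and Q0: "0 \<le> Q"
    and Q1: "Q < (\<Sum>k=1..m. g k)"
  defines "L \<equiv> LEAST P. Q < (\<Sum>k=1..P. g k)"
  shows "L \<in> {1..m}"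
    and "\<And>P. P \<in> {1..m} \<Longrightarrow>
           L = P \<longleftrightarrow> (\<Sum>k=1..<P. g k) \<le> Q \<and> Q < (\<Sum>k=1..<P. g k) + g P"
proof -
  have L_above: "Q < (\<Sum>k=1..L. g k)" unfolding L_def by (rule LeastI[of _ m]) (rule Q1)
  have "L \<le> m" unfolding L_def by (rule Least_le) (rule Q1)
  moreover have "L \<noteq> 0" using L_above Q0 by (cases "L = 0") auto
  ultimately show L: "L \<in> {1..m}" by simp
  have split: "(\<Sum>k=1..P. g k) = (\<Sum>k=1..<P. g k) + g P" if "1 \<le> P" for P
    using that by (simp add: atLeastLessThanSuc_atLeastAtMost[symmetric] sum.atLeastLessThan_Suc)
  have unique: "L = P"
    if P: "P \<in> {1..m}" and below_Q: "(\<Sum>k=1..<P. g k) \<le> Q" and above_Q: "Q < (\<Sum>k=1..<P. g k) + g P" for P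
    unfolding L_def
  proof (rule Least_equality)
    show "Q < (\<Sum>k=1..P. g k)" using split[of P] P above_Q by simp
  next
    fix P' assume P': "Q < (\<Sum>k=1..P'. g k)"
    show "P \<le> P'"
    proof (rule ccontr)
      assume "\<not> P \<le> P'"
      then have "(\<Sum>k=1..P'. g k) \<le> (\<Sum>k=1..<P. g k)"
        using P g by (intro sum_mono2) auto
      then show False using P' below_Q by simp
    qed
  qed
  have "\<not> Q < (\<Sum>k=1..L-1. g k)"
    unfolding L_def by (rule not_less_Least) (use L L_def in simp)
  moreover have "{1..L-1} = {1..<L}" using L by auto
  ultimately have "(\<Sum>k=1..<L. g k) \<le> Q \<and> Q < (\<Sum>k=1..<L. g k) + g L"
    using L_above split[of L] L by simp
  then show "L = P \<longleftrightarrow> (\<Sum>k=1..<P. g k) \<le> Q \<and> Q < (\<Sum>k=1..<P. g k) + g P"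
    if "P \<in> {1..m}" for P
    using unique[OF that] by blast
qed

definition swing :: "nat \<Rightarrow> real \<Rightarrow> (nat \<Rightarrow> real) \<Rightarrow> nat \<Rightarrow> nat set \<Rightarrow> bool" where
  "swing m q w i S \<longleftrightarrow> sum w S \<le> quota m q w \<and> quota m q w < sum w S + w i"

definition swings :: "nat \<Rightarrow> real \<Rightarrow> (nat \<Rightarrow> real) \<Rightarrow> nat \<Rightarrow> nat set set" where
  "swings m q w i = {S \<in> Pow ({1..m} - {i}). swing m q w i S}"

lemma sorted_pivot_iff_swing:
  fixes x :: "nat \<Rightarrow> real"
  assumes w: "\<forall>k\<in>{1..m}. 0 \<le> w k"
    and Q0: "0 \<le> quota m q w" and Q1: "quota m q w < (\<Sum>k=1..m. w k)"
    and bij: "bij_betw \<sigma> {1..m} {1..m}" and mono: "strict_mono_on {1..m} (x \<circ> \<sigma>)"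
  shows "\<sigma> (LEAST P. quota m q w < (\<Sum>k=1..P. w (\<sigma> k))) = i \<longleftrightarrow>
    i \<in> {1..m} \<and> swing m q w i (below {1..m} x i)"
proof -
  let ?N = "{1..m}" and ?Q = "quota m q w"
  let ?L = "LEAST P. ?Q < (\<Sum>k=1..P. w (\<sigma> k))"
  have inj: "inj_on \<sigma> ?N" using bij by (rule bij_betw_imp_inj_on)
  have \<sigma>N: "\<sigma> k \<in> ?N" if "k \<in> ?N" for k using bij_betw_apply[OF bij that] .
  have nonneg: "\<And>k. k \<in> ?N \<Longrightarrow> 0 \<le> w (\<sigma> k)" using w \<sigma>N by blast
  have total: "?Q < (\<Sum>k=1..m. w (\<sigma> k))"
    using sum.reindex_bij_betw[OF bij, of w] Q1 by simp
  have L: "?L \<in> ?N"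
    using least_threshold(1)[of m "\<lambda>k. w (\<sigma> k)"] nonneg Q0 total by blast
  have L_iff: "?L = P \<longleftrightarrow>
      (\<Sum>k=1..<P. w (\<sigma> k)) \<le> ?Q \<and> ?Q < (\<Sum>k=1..<P. w (\<sigma> k)) + w (\<sigma> P)"
    if "P \<in> ?N" for P
    using least_threshold(2)[of m "\<lambda>k. w (\<sigma> k)"] nonneg Q0 total that by blast
  have below_sum: "sum w (below ?N x (\<sigma> P)) = (\<Sum>k=1..<P. w (\<sigma> k))" if "P \<in> ?N" for P
  proof -
    have "{1..<P} \<subseteq> ?N" using that by auto
    then show ?thesis
      using below_sorted[OF bij mono that] sum.reindex[OF inj_on_subset[OF inj], of "{1..<P}" w]
      by simp
  qed
  show ?thesis
  proof
    assume "\<sigma> ?L = i"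
    then show "i \<in> ?N \<and> swing m q w i (below ?N x i)"
      using L L_iff[OF L] below_sum[OF L] \<sigma>N unfolding swing_def by auto
  next
    assume i: "i \<in> ?N \<and> swing m q w i (below ?N x i)"
    moreover have "?N = \<sigma> ` ?N" using bij by (simp add: bij_betw_def)
    ultimately obtain P where P: "P \<in> ?N" "i = \<sigma> P" by blast
    then show "\<sigma> ?L = i"
      using i L_iff[OF P(1)] below_sum[OF P(1)] unfolding swing_def by auto
  qed
qed

(* Key combinatorial fact: i is pivotal iff there are no ties and its predecessors form a swing
   for i.  This explains both the order invariance of pivotality and the Shapley weights. *)
lemma pivotal_iff_swing:
  fixes x :: "nat \<Rightarrow> real"
  assumes w: "\<forall>k\<in>{1..m}. 0 \<le> w k"
    and Q0: "0 \<le> quota m q w" and Q1: "quota m q w < (\<Sum>k=1..m. w k)"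
  shows "pivotal m q w x i \<longleftrightarrow>
           inj_on x {1..m} \<and> i \<in> {1..m} \<and> swing m q w i (below {1..m} x i)"
proof
  assume "pivotal m q w x i"
  then show "inj_on x {1..m} \<and> i \<in> {1..m} \<and> swing m q w i (below {1..m} x i)"
    unfolding pivotal_def using sorted_pivot_iff_swing[OF w Q0 Q1] by blast
next
  assume swing: "inj_on x {1..m} \<and> i \<in> {1..m} \<and> swing m q w i (below {1..m} x i)"
  then obtain \<sigma> where "bij_betw \<sigma> {1..m} {1..m}" "strict_mono_on {1..m} (x \<circ> \<sigma>)"
    using sorting_exists by blast
  then show "pivotal m q w x i"
    unfolding pivotal_def using swing sorted_pivot_iff_swing[OF w Q0 Q1] by blast
qed

lemma pivotal_iff_swings:
  fixes x :: "nat \<Rightarrow> real"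
  assumes w: "\<forall>k\<in>{1..m}. 0 \<le> w k"
    and Q0: "0 \<le> quota m q w" and Q1: "quota m q w < (\<Sum>k=1..m. w k)"
  shows "pivotal m q w x i \<longleftrightarrow>
    i \<in> {1..m} \<and> (\<exists>S\<in>swings m q w i. inj_on x {1..m} \<and> below {1..m} x i = S)"
proof -
  have "below {1..m} x i \<subseteq> {1..m} - {i}" unfolding below_def by auto
  then show ?thesis using pivotal_iff_swing[OF w Q0 Q1, of x i] unfolding swings_def by auto
qed

lemma pivotal_order_invariant:
  fixes x y :: "nat \<Rightarrow> real"
  assumes w: "\<forall>k\<in>{1..m}. 0 \<le> w k"
    and Q0: "0 \<le> quota m q w" and Q1: "quota m q w < (\<Sum>k=1..m. w k)"
    and order: "\<forall>a\<in>{1..m}. \<forall>b\<in>{1..m}. x a < x b \<longleftrightarrow> y a < y b"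
  shows "pivotal m q w x i \<longleftrightarrow> pivotal m q w y i"
proof -
  have "x a = x b \<longleftrightarrow> y a = y b" if "a \<in> {1..m}" "b \<in> {1..m}" for a b
    using order that by (metis linorder_neqE_linordered_idom less_irrefl)
  then have "inj_on x {1..m} \<longleftrightarrow> inj_on y {1..m}" unfolding inj_on_def by blast
  moreover have "below {1..m} x i = below {1..m} y i" if "i \<in> {1..m}"
    using order that unfolding below_def by auto
  ultimately show ?thesis
    using pivotal_iff_swing[OF w Q0 Q1, of x i] pivotal_iff_swing[OF w Q0 Q1, of y i] by auto
qed

lemma wvg_marginal:
  assumes "finite S" "i \<notin> S" "0 \<le> w i"
  shows "wvg m q w (S \<union> {i}) - wvg m q w S = (if swing m q w i S then 1 else 0)"
  using assms unfolding wvg_def swing_def by auto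

lemma shapley_coeff:
  assumes "1 \<le> m" "k \<le> m - 1"
  shows "fact k * fact (m - k - 1) / fact m = 1 / (real m * real ((m - 1) choose k))"
proof -
  have "real ((m - 1) choose k) = fact (m - 1) / (fact k * fact (m - 1 - k))"
    by (rule binomial_fact[OF assms(2)])
  moreover have "(fact m :: real) = real m * fact (m - 1)"
    using assms(1) by (simp add: fact_reduce)
  moreover have "m - k - 1 = m - 1 - k" by simp
  moreover have "0 < (m - 1) choose k" "0 < m" using assms by simp_all
  ultimately show ?thesis by (simp add: field_simps)
qed

lemma shapley_wvg:
  assumes w: "\<forall>k\<in>{1..m}. 0 \<le> w k" and i: "i \<in> {1..m}"
  shows "shapley m (wvg m q w) i =
    (\<Sum>S\<in>swings m q w i. 1 / (real m * real ((m - 1) choose card S)))"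
proof -
  have summand: "fact (card S) * fact (m - card S - 1) / fact m * (wvg m q w (S \<union> {i}) - wvg m q w S) =
      (if swing m q w i S then 1 / (real m * real ((m - 1) choose card S)) else 0)"
    if S: "S \<in> Pow ({1..m} - {i})" for S
  proof -
    have "finite S" "i \<notin> S" using S finite_subset[of S "{1..m}"] by auto
    moreover have "card S \<le> m - 1"
      using card_mono[of "{1..m} - {i}" S] S i by simp
    ultimately show ?thesis
      using wvg_marginal[of S i w m q] bspec[OF w i] shapley_coeff[of m "card S"] i by simp
  qed
  have "shapley m (wvg m q w) i = (\<Sum>S\<in>Pow ({1..m} - {i}).
      if swing m q w i S then 1 / (real m * real ((m - 1) choose card S)) else 0)"
    unfolding shapley_def by (rule sum.cong[OF refl summand])
  also have "\<dots> = (\<Sum>S\<in>swings m q w i. 1 / (real m * real ((m - 1) choose card S)))"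
    unfolding swings_def by (rule sum.inter_filter[symmetric]) simp
  finally show ?thesis .
qed

(* Every coordinate is measurable on the product space, also those outside the index set
   (where elements of the product space are undefined); this lets the measurability
   prover handle bounded quantifiers over N. *)
lemma measurable_component_any [measurable (raw)]:
  "(\<lambda>x. x b) \<in> borel_measurable (\<Pi>\<^sub>M k\<in>N. (borel :: real measure))"
proof (cases "b \<in> N")
  case True then show ?thesis by (rule measurable_component_singleton)
next
  case False
  then have "x b = undefined" if "x \<in> space (\<Pi>\<^sub>M k\<in>N. (borel :: real measure))" for x
    using that by (auto simp: space_PiM PiE_def extensional_def)
  then show ?thesis by (subst measurable_cong[where g="\<lambda>_. undefined"]) auto
qed

lemma measurable_inj_on:
  "Measurable.pred (\<Pi>\<^sub>M k\<in>N. borel) (\<lambda>x :: nat \<Rightarrow> real. inj_on x N)"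
proof -
  have "inj_on x N \<longleftrightarrow> (\<forall>b\<in>N. \<forall>c\<in>N. b \<noteq> c \<longrightarrow> x b < x c \<or> x c < x b)"
    for x :: "nat \<Rightarrow> real"
    unfolding inj_on_def by (metis linorder_neqE_linordered_idom less_irrefl)
  then show ?thesis by simp measurable
qed

lemma measurable_below_event:
  "Measurable.pred (\<Pi>\<^sub>M k\<in>N. borel) (\<lambda>x. inj_on x N \<and> below N x a = S)"
proof -
  have "below N x a = S \<longleftrightarrow> S \<subseteq> N \<and> (\<forall>b\<in>N. x b < x a \<longleftrightarrow> b \<in> S)" for x :: "nat \<Rightarrow> real"
    unfolding below_def by auto
  then show ?thesis using measurable_inj_on by simp measurable
qed

lemma measurable_pivotal:
  assumes w: "\<forall>k\<in>{1..m}. 0 \<le> w k"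
    and Q0: "0 \<le> quota m q w" and Q1: "quota m q w < (\<Sum>k=1..m. w k)"
  shows "Measurable.pred (\<Pi>\<^sub>M k\<in>{1..m}. borel) (\<lambda>x. pivotal m q w x i)"
proof -
  have finite: "finite (swings m q w i)" by (simp add: swings_def)
  show ?thesis
    unfolding pivotal_iff_swings[OF w Q0 Q1] by (measurable, fact finite, rule measurable_below_event)
qed

lemma (in prob_space) indep_vars_reindex:
  assumes ind: "indep_vars M' X I" and g: "inj_on g J" "g ` J \<subseteq> I"
  shows "indep_vars (\<lambda>j. M' (g j)) (\<lambda>j. X (g j)) J"
proof -
  let ?F = "\<lambda>i. {X i -` A \<inter> space M | A. A \<in> sets (M' i)}"
  have rv: "\<forall>i\<in>I. random_variable (M' i) (X i)" and isets: "indep_sets ?F I"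
    using ind unfolding indep_vars_def2 by auto
  have ev: "\<forall>i\<in>I. ?F i \<subseteq> events"
    and pr: "\<And>K A. K \<subseteq> I \<Longrightarrow> K \<noteq> {} \<Longrightarrow> finite K \<Longrightarrow> A \<in> Pi K ?F \<Longrightarrow>
       prob (\<Inter>j\<in>K. A j) = (\<Prod>j\<in>K. prob (A j))"
    using isets unfolding indep_sets_def by auto
  have "indep_sets (\<lambda>j. ?F (g j)) J"
    unfolding indep_sets_def
  proof (intro conjI ballI allI impI)
    fix j assume "j \<in> J" then show "?F (g j) \<subseteq> events" using ev g by auto
  next
    fix K A assume K: "K \<subseteq> J" "K \<noteq> {}" "finite K" and A: "A \<in> Pi K (\<lambda>j. ?F (g j))"
    define B where "B = (\<lambda>i. A (the_inv_into K g i))"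
    have injK: "inj_on g K" using g(1) K(1) by (rule inj_on_subset)
    have Bg: "B (g k) = A k" if "k \<in> K" for k
      unfolding B_def using the_inv_into_f_f[OF injK that] by simp
    have "B \<in> Pi (g ` K) ?F"
    proof
      fix i assume "i \<in> g ` K"
      then obtain k where k: "k \<in> K" "i = g k" by auto
      then show "B i \<in> ?F i" using A Bg[OF k(1)] by auto
    qed
    then have "prob (\<Inter>i\<in>g ` K. B i) = (\<Prod>i\<in>g ` K. prob (B i))"
    proof (rule pr[rotated 3])
      show "g ` K \<subseteq> I" using K(1) g(2) by blast
    qed (use K in auto)
    moreover have "(\<Inter>i\<in>g ` K. B i) = (\<Inter>k\<in>K. A k)" using Bg by auto
    moreover have "(\<Prod>i\<in>g ` K. prob (B i)) = (\<Prod>k\<in>K. prob (A k))"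
      using prod.reindex[OF injK, of "\<lambda>i. prob (B i)"] Bg by simp
    ultimately show "prob (\<Inter>j\<in>K. A j) = (\<Prod>j\<in>K. prob (A j))" by simp
  qed
  then show ?thesis unfolding indep_vars_def2 using rv g by auto
qed

lemma diagonal_sets: "{z :: real \<times> real. fst z = snd z} \<in> sets (borel \<Otimes>\<^sub>M borel)"
proof -
  have "{z :: real \<times> real. fst z = snd z} = {z \<in> space (borel \<Otimes>\<^sub>M borel). fst z = snd z}"
    by (simp add: space_pair_measure)
  also have "\<dots> \<in> sets (borel \<Otimes>\<^sub>M borel)"
    by (rule borel_measurable_eq) measurable
  finally show ?thesis .
qed

lemma diagonal_null:
  fixes D :: "real measure"
  assumes D: "prob_space D" "sets D = sets borel" and atomless: "\<And>x. emeasure D {x} = 0"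
  shows "measure (D \<Otimes>\<^sub>M D) {z. fst z = snd z} = 0"
proof -
  interpret D: prob_space D by (rule D(1))
  have "sets (D \<Otimes>\<^sub>M D) = sets (borel \<Otimes>\<^sub>M borel)"
    using D(2) by (intro sets_pair_measure_cong) auto
  then have diag: "{z. fst z = snd z} \<in> sets (D \<Otimes>\<^sub>M D)" using diagonal_sets by simp
  have "emeasure (D \<Otimes>\<^sub>M D) {z. fst z = snd z} = (\<integral>\<^sup>+x. emeasure D {x} \<partial>D)"
    using D.emeasure_pair_measure_alt[OF diag] by (simp add: vimage_def)
  then show ?thesis using atomless by (simp add: measure_def)
qed

lemma density_atomless:
  assumes "f \<in> borel_measurable lborel"
  shows "emeasure (density lborel f) {x} = 0"
proof -
  have "AE y in lborel. y \<in> {x} \<longrightarrow> f y = 0"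
    using AE_lborel_singleton[of x] by (rule eventually_mono) auto
  then have "{x} \<in> null_sets (density lborel f)"
    using null_sets_density_iff[OF assms] by simp
  then show ?thesis by auto
qed

(* Its law is invariant under permutations of N and has no ties a.s.,
   so the relative order of the mu_k is a uniformly random permutation. *)
locale iid_continuous = prob_space M for M :: "'a measure" +
  fixes N :: "nat set" and \<mu> :: "nat \<Rightarrow> 'a \<Rightarrow> real" and f :: "real \<Rightarrow> ennreal"
  assumes finite_N: "finite N" and nonempty_N: "N \<noteq> {}"
    and indep: "indep_vars (\<lambda>_. borel) \<mu> N"
    and density: "\<And>k. k \<in> N \<Longrightarrow> distributed M lborel (\<mu> k) f"
begin

lemma measurable_\<mu> [measurable]: "k \<in> N \<Longrightarrow> \<mu> k \<in> borel_measurable M"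
  using distributed_measurable[OF density] by simp

lemma distr_\<mu>: "k \<in> N \<Longrightarrow> distr M borel (\<mu> k) = density lborel f"
  using distributed_distr_eq_density[OF density] by (simp cong: distr_cong)

lemma law_permuted:
  assumes \<pi>: "bij_betw \<pi> N N"
  shows "distr M (\<Pi>\<^sub>M k\<in>N. borel) (\<lambda>\<omega>. \<lambda>k\<in>N. \<mu> (\<pi> k) \<omega>) = (\<Pi>\<^sub>M k\<in>N. density lborel f)"
proof -
  have \<pi>N: "\<pi> k \<in> N" if "k \<in> N" for k using bij_betw_apply[OF \<pi> that] .
  have "indep_vars (\<lambda>_. borel) (\<lambda>k. \<mu> (\<pi> k)) N"
    using indep_vars_reindex[OF indep bij_betw_imp_inj_on[OF \<pi>]] \<pi>N by auto
  then have "distr M (\<Pi>\<^sub>M k\<in>N. borel) (\<lambda>\<omega>. \<lambda>k\<in>N. \<mu> (\<pi> k) \<omega>) =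
      (\<Pi>\<^sub>M k\<in>N. distr M borel (\<mu> (\<pi> k)))"
    using indep_vars_iff_distr_eq_PiM'[OF nonempty_N, where M'="\<lambda>_. borel" and X="\<lambda>k. \<mu> (\<pi> k)"] \<pi>N
    by simp
  also have "\<dots> = (\<Pi>\<^sub>M k\<in>N. density lborel f)"
    by (rule PiM_cong) (simp_all add: distr_\<mu> \<pi>N)
  finally show ?thesis .
qed

lemma prob_permuted:
  assumes \<pi>: "bij_betw \<pi> N N" and \<Phi>: "Measurable.pred (\<Pi>\<^sub>M k\<in>N. borel) \<Phi>"
  shows "prob {\<omega> \<in> space M. \<Phi> (\<lambda>k\<in>N. \<mu> (\<pi> k) \<omega>)} = prob {\<omega> \<in> space M. \<Phi> (\<lambda>k\<in>N. \<mu> k \<omega>)}"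
proof -
  have by_law: "prob {\<omega> \<in> space M. \<Phi> (\<lambda>k\<in>N. \<mu> (\<rho> k) \<omega>)} =
      measure (\<Pi>\<^sub>M k\<in>N. density lborel f) {x \<in> space (\<Pi>\<^sub>M k\<in>N. borel). \<Phi> x}"
    if \<rho>: "bij_betw \<rho> N N" for \<rho>
  proof -
    have Y: "(\<lambda>\<omega>. \<lambda>k\<in>N. \<mu> (\<rho> k) \<omega>) \<in> measurable M (\<Pi>\<^sub>M k\<in>N. borel)"
      using bij_betw_apply[OF \<rho>] by (intro measurable_restrict) auto
    have "{x \<in> space (\<Pi>\<^sub>M k\<in>N. borel). \<Phi> x} \<in> sets (\<Pi>\<^sub>M k\<in>N. borel)"
      using \<Phi> by (simp add: pred_def)
    moreover have "(\<lambda>\<omega>. \<lambda>k\<in>N. \<mu> (\<rho> k) \<omega>) -` {x \<in> space (\<Pi>\<^sub>M k\<in>N. borel). \<Phi> x} \<inter> space M =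
        {\<omega> \<in> space M. \<Phi> (\<lambda>k\<in>N. \<mu> (\<rho> k) \<omega>)}"
      using measurable_space[OF Y] by auto
    ultimately show ?thesis using measure_distr[OF Y] law_permuted[OF \<rho>] by simp
  qed
  show ?thesis using by_law[OF \<pi>] by_law[of id] by simp
qed

lemma no_tie:
  assumes a: "a \<in> N" and b: "b \<in> N" and ab: "a \<noteq> b"
  shows "prob {\<omega> \<in> space M. \<mu> a \<omega> = \<mu> b \<omega>} = 0"
proof -
  let ?D = "density lborel f" and ?Diag = "{z :: real \<times> real. fst z = snd z}"
  have "inj_on (\<lambda>c. if c then a else b) UNIV" using ab by (auto simp: inj_on_def)
  then have "indep_vars (\<lambda>_. borel) (\<lambda>c. \<mu> (if c then a else b)) UNIV"
    by (rule indep_vars_reindex[OF indep]) (use a b in auto)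
  then have "indep_var borel (\<mu> a) borel (\<mu> b)"
    unfolding indep_var_def
    by (rule indep_vars_cong[THEN iffD1, rotated 3]) (auto split: bool.split)
  then have joint: "distr M (borel \<Otimes>\<^sub>M borel) (\<lambda>\<omega>. (\<mu> a \<omega>, \<mu> b \<omega>)) = ?D \<Otimes>\<^sub>M ?D"
    using distr_\<mu>[OF a] distr_\<mu>[OF b] by (simp add: indep_var_distribution_eq)
  have D: "prob_space ?D" using prob_space_distr[OF measurable_\<mu>[OF a]] distr_\<mu>[OF a] by simp
  have atomless: "emeasure ?D {x} = 0" for x
    using density_atomless distributed_borel_measurable[OF density[OF a]] by blast
  have pair: "(\<lambda>\<omega>. (\<mu> a \<omega>, \<mu> b \<omega>)) \<in> measurable M (borel \<Otimes>\<^sub>M borel)"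
    using a b by measurable
  have "prob {\<omega> \<in> space M. \<mu> a \<omega> = \<mu> b \<omega>} =
      measure (distr M (borel \<Otimes>\<^sub>M borel) (\<lambda>\<omega>. (\<mu> a \<omega>, \<mu> b \<omega>))) ?Diag"
    using measure_distr[OF pair diagonal_sets] by (simp add: vimage_def Int_def conj_commute)
  also have "\<dots> = 0" using joint diagonal_null[OF D _ atomless] by simp
  finally show ?thesis .
qed

lemma AE_no_ties: "AE \<omega> in M. inj_on (\<lambda>k. \<mu> k \<omega>) N"
proof -
  have "AE \<omega> in M. \<mu> a \<omega> \<noteq> \<mu> b \<omega>" if "a \<in> N" "b \<in> N" "a \<noteq> b" for a b
  proof (rule AE_I)
    show "{\<omega> \<in> space M. \<not> \<mu> a \<omega> \<noteq> \<mu> b \<omega>} \<in> events"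
      using that by measurable
    then show "emeasure M {\<omega> \<in> space M. \<not> \<mu> a \<omega> \<noteq> \<mu> b \<omega>} = 0"
      using no_tie[OF that] by (simp add: emeasure_eq_measure)
  qed auto
  then have "AE \<omega> in M. \<forall>a\<in>N. \<forall>b\<in>N. a \<noteq> b \<longrightarrow> \<mu> a \<omega> \<noteq> \<mu> b \<omega>"
    using finite_N by (simp add: AE_finite_all)
  then show ?thesis by (rule eventually_mono) (auto simp: inj_on_def)
qed

definition below_prob :: "nat \<Rightarrow> nat set \<Rightarrow> real" where
  "below_prob a S = prob {\<omega> \<in> space M. inj_on (\<lambda>k. \<mu> k \<omega>) N \<and> below N (\<lambda>k. \<mu> k \<omega>) a = S}"

lemma vector_event:
  assumes "Measurable.pred (\<Pi>\<^sub>M k\<in>N. borel) \<Phi>"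
  shows "{\<omega> \<in> space M. \<Phi> (\<lambda>k\<in>N. \<mu> k \<omega>)} \<in> events"
proof -
  have "(\<lambda>\<omega>. \<lambda>k\<in>N. \<mu> k \<omega>) \<in> measurable M (\<Pi>\<^sub>M k\<in>N. borel)"
    by (intro measurable_restrict) auto
  from measurable_compose[OF this assms] show ?thesis by (simp add: pred_def)
qed

lemma below_event:
  "a \<in> N \<Longrightarrow> {\<omega> \<in> space M. inj_on (\<lambda>k. \<mu> k \<omega>) N \<and> below N (\<lambda>k. \<mu> k \<omega>) a = S} \<in> events"
  using vector_event[OF measurable_below_event[of N a S]] by (simp add: below_restrict)

lemma below_prob_permute:
  assumes \<pi>: "bij_betw \<pi> N N" and a: "a \<in> N" and S: "S \<subseteq> N"
  shows "below_prob (\<pi> a) (\<pi> ` S) = below_prob a S"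
proof -
  let ?E = "\<lambda>x. inj_on x N \<and> below N x a = S"
  have "prob {\<omega> \<in> space M. ?E (\<lambda>k\<in>N. \<mu> (\<pi> k) \<omega>)} = prob {\<omega> \<in> space M. ?E (\<lambda>k\<in>N. \<mu> k \<omega>)}"
    by (rule prob_permuted[OF \<pi> measurable_below_event])
  moreover have "?E (\<lambda>k\<in>N. \<mu> (\<pi> k) \<omega>) \<longleftrightarrow>
      inj_on (\<lambda>k. \<mu> k \<omega>) N \<and> below N (\<lambda>k. \<mu> k \<omega>) (\<pi> a) = \<pi> ` S" for \<omega>
    using below_restrict[OF a, of "\<lambda>k. \<mu> (\<pi> k) \<omega>"] below_permute[OF \<pi> a S, of "\<lambda>k. \<mu> k \<omega>"]
    by (simp add: comp_def)
  ultimately show ?thesis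
    unfolding below_prob_def using below_restrict[OF a] by simp
qed

lemma below_prob_eq:
  assumes "a \<in> N" "b \<in> N" "S \<subseteq> N - {a}" "T \<subseteq> N - {b}" "card S = card T"
  shows "below_prob a S = below_prob b T"
proof -
  obtain \<pi> where "bij_betw \<pi> N N" "\<pi> a = b" "\<pi> ` S = T"
    using exists_permutation[OF finite_N assms] .
  moreover have "S \<subseteq> N" using assms(3) by auto
  ultimately show ?thesis using below_prob_permute[of \<pi> a S] assms(1) by simp
qed

lemma prob_no_ties: "prob {\<omega> \<in> space M. inj_on (\<lambda>k. \<mu> k \<omega>) N} = 1"
proof -
  have "{\<omega> \<in> space M. inj_on (\<lambda>k. \<mu> k \<omega>) N} \<in> events"
    using vector_event[OF measurable_inj_on] by simp
  then show ?thesis using AE_no_ties by (simp add: prob_eq_1)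
qed

lemma below_prob_partition:
  assumes s: "s < card N"
  shows "(\<Sum>(a, S) \<in> Sigma N (\<lambda>a. {S. S \<subseteq> N - {a} \<and> card S = s}). below_prob a S) = 1"
proof -
  let ?I = "Sigma N (\<lambda>a. {S. S \<subseteq> N - {a} \<and> card S = s})"
  define E where "E = (\<lambda>(a, S). {\<omega> \<in> space M. inj_on (\<lambda>k. \<mu> k \<omega>) N \<and> below N (\<lambda>k. \<mu> k \<omega>) a = S})"
  have finite_I: "finite ?I" using finite_N by (intro finite_SigmaI) auto
  have rank_inj: "a = b" if "\<omega> \<in> E (a, S)" "\<omega> \<in> E (b, T)" "(a, S) \<in> ?I" "(b, T) \<in> ?I" for \<omega> a b S T
    using that bij_betw_imp_inj_on[OF rank_bij[OF finite_N, of "\<lambda>k. \<mu> k \<omega>"]]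
    unfolding E_def by (auto dest: inj_onD)
  have disjoint: "disjoint_family_on E ?I"
    unfolding disjoint_family_on_def
  proof (intro ballI impI)
    fix p p' assume p: "p \<in> ?I" "p' \<in> ?I" "p \<noteq> p'"
    obtain a S b T where ab: "p = (a, S)" "p' = (b, T)" by (cases p, cases p')
    show "E p \<inter> E p' = {}"
    proof (rule ccontr)
      assume "E p \<inter> E p' \<noteq> {}"
      then obtain \<omega> where "\<omega> \<in> E (a, S)" "\<omega> \<in> E (b, T)" using ab by auto
      moreover from this have "a = b" using rank_inj p ab by blast
      ultimately show False using p ab unfolding E_def by auto
    qed
  qed
  have union: "(\<Union>p\<in>?I. E p) = {\<omega> \<in> space M. inj_on (\<lambda>k. \<mu> k \<omega>) N}"
  proof (intro subset_antisym subsetI)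
    fix \<omega> assume \<omega>: "\<omega> \<in> {\<omega> \<in> space M. inj_on (\<lambda>k. \<mu> k \<omega>) N}"
    then have "s \<in> (\<lambda>a. card (below N (\<lambda>k. \<mu> k \<omega>) a)) ` N"
      using rank_bij[OF finite_N, of "\<lambda>k. \<mu> k \<omega>"] s by (simp add: bij_betw_def)
    then obtain a where "a \<in> N" "card (below N (\<lambda>k. \<mu> k \<omega>) a) = s" by blast
    then have "(a, below N (\<lambda>k. \<mu> k \<omega>) a) \<in> ?I" "\<omega> \<in> E (a, below N (\<lambda>k. \<mu> k \<omega>) a)"
      using \<omega> by (auto simp: E_def below_def)
    then show "\<omega> \<in> (\<Union>p\<in>?I. E p)" by blast
  qed (auto simp: E_def)
  have events: "E ` ?I \<subseteq> events" using below_event by (auto simp: E_def)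
  have "prob (\<Union>p\<in>?I. E p) = (\<Sum>p\<in>?I. prob (E p))"
    using finite_measure_finite_Union[OF finite_I events disjoint] .
  then show ?thesis using union prob_no_ties by (simp add: E_def below_prob_def case_prod_unfold)
qed

lemma below_prob_value:
  assumes a: "a \<in> N" and S: "S \<subseteq> N - {a}"
  shows "below_prob a S = 1 / (real (card N) * real ((card N - 1) choose card S))"
proof -
  let ?n = "card N" and ?s = "card S"
  let ?I = "Sigma N (\<lambda>b. {T. T \<subseteq> N - {b} \<and> card T = ?s})"
  have card_N_a: "card (N - {b}) = ?n - 1" if "b \<in> N" for b using that finite_N by simp
  have "?s \<le> ?n - 1" using card_mono[OF _ S] finite_N card_N_a[OF a] by simp
  moreover have "0 < ?n" using finite_N nonempty_N by (simp add: card_gt_0_iff)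
  ultimately have s: "?s < ?n" by linarith
  have "card ?I = (\<Sum>b\<in>N. (?n - 1) choose ?s)"
    using finite_N card_N_a by (simp add: card_SigmaI n_subsets)
  then have card_I: "card ?I = ?n * ((?n - 1) choose ?s)" by simp
  have "1 = (\<Sum>(b, T) \<in> ?I. below_prob b T)" using below_prob_partition[OF s] by simp
  also have "\<dots> = (\<Sum>p \<in> ?I. below_prob a S)"
    using below_prob_eq[OF _ a _ S] by (intro sum.cong) auto
  also have "\<dots> = real (?n * ((?n - 1) choose ?s)) * below_prob a S" using card_I by simp
  finally have "real (?n * ((?n - 1) choose ?s)) * below_prob a S = 1" ..
  moreover have "0 < (?n - 1) choose ?s" using \<open>?s \<le> ?n - 1\<close> by simp
  ultimately show ?thesis using \<open>0 < ?n\<close> by (simp add: field_simps)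
qed

lemma prob_below_in:
  assumes a: "a \<in> N" and fin: "finite \<S>"
  shows "prob {\<omega> \<in> space M. inj_on (\<lambda>k. \<mu> k \<omega>) N \<and> below N (\<lambda>k. \<mu> k \<omega>) a \<in> \<S>} =
    (\<Sum>S\<in>\<S>. below_prob a S)"
proof -
  define E where "E S = {\<omega> \<in> space M. inj_on (\<lambda>k. \<mu> k \<omega>) N \<and> below N (\<lambda>k. \<mu> k \<omega>) a = S}" for S
  have "disjoint_family_on E \<S>" by (auto simp: disjoint_family_on_def E_def)
  moreover have "E ` \<S> \<subseteq> events" using below_event[OF a] by (auto simp: E_def)
  ultimately have "prob (\<Union>S\<in>\<S>. E S) = (\<Sum>S\<in>\<S>. prob (E S))"
    using finite_measure_finite_Union[OF fin] by simp
  moreover have "(\<Union>S\<in>\<S>. E S) =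
      {\<omega> \<in> space M. inj_on (\<lambda>k. \<mu> k \<omega>) N \<and> below N (\<lambda>k. \<mu> k \<omega>) a \<in> \<S>}"
    by (auto simp: E_def)
  ultimately show ?thesis by (simp add: E_def below_prob_def)
qed

end

lemma eventually_affine_order:
  fixes x y c d :: real
  assumes "x \<noteq> y"
  shows "\<forall>\<^sub>F t in at_top. (t * x + c < t * y + d \<longleftrightarrow> x < y)"
  using eventually_gt_at_top[of "\<bar>d - c\<bar> / \<bar>y - x\<bar>"]
proof eventually_elim
  case (elim t)
  have "\<bar>d - c\<bar> < t * \<bar>y - x\<bar>"
    using elim assms by (simp add: divide_less_eq)
  then show ?case
    by (cases "x < y") (auto simp: abs_if algebra_simps split: if_splits)
qed

lemma eventually_same_order:
  fixes x e :: "nat \<Rightarrow> real"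
  assumes "finite N" "inj_on x N"
  shows "\<forall>\<^sub>F t in at_top. \<forall>a\<in>N. \<forall>b\<in>N. (t * x a + e a < t * x b + e b \<longleftrightarrow> x a < x b)"
proof (intro eventually_ball_finite[OF assms(1)] ballI)
  fix a b assume ab: "a \<in> N" "b \<in> N"
  show "\<forall>\<^sub>F t in at_top. (t * x a + e a < t * x b + e b \<longleftrightarrow> x a < x b)"
  proof (cases "a = b")
    case False
    then have "x a \<noteq> x b" using inj_onD[OF assms(2) _ ab] by blast
    then show ?thesis by (rule eventually_affine_order)
  qed simp
qed

(* If the events A t almost surely eventually agree with B, their probabilities converge
   (dominated convergence for indicator functions). *)
lemma (in prob_space) prob_tendsto_eventually_equal:
  fixes A :: "real \<Rightarrow> 'a set"
  assumes A: "\<And>t. A t \<in> events" and B: "B \<in> events"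
    and eq: "AE \<omega> in M. \<forall>\<^sub>F t in at_top. \<omega> \<in> A t \<longleftrightarrow> \<omega> \<in> B"
  shows "((\<lambda>t. prob (A t)) \<longlongrightarrow> prob B) at_top"
proof -
  have "((\<lambda>t. integral\<^sup>L M (indicator (A t))) \<longlongrightarrow> integral\<^sup>L M (indicator B :: _ \<Rightarrow> real)) at_top"
  proof (rule integral_dominated_convergence_at_top[OF _ _ integrable_const])
    show "AE \<omega> in M. ((\<lambda>t. indicator (A t) \<omega> :: real) \<longlongrightarrow> indicator B \<omega>) at_top"
      using eq by eventually_elim (auto intro: tendsto_eventually elim: eventually_mono simp: indicator_def)
    show "\<forall>\<^sub>F t in at_top. AE \<omega> in M. norm (indicator (A t) \<omega> :: real) \<le> 1"
      by (intro always_eventually allI AE_I2) (simp add: indicator_def)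
  qed (use A B in auto)
  then show ?thesis using A B by simp
qed

context iid_continuous
begin

lemma prob_pivotal:
  assumes N: "N = {1..m}" and w: "\<forall>k\<in>{1..m}. 0 \<le> w k"
    and Q0: "0 \<le> quota m q w" and Q1: "quota m q w < (\<Sum>k=1..m. w k)" and a: "a \<in> N"
  shows "prob {\<omega> \<in> space M. pivotal m q w (\<lambda>k. \<mu> k \<omega>) a} = shapley m (wvg m q w) a"
proof -
  have "prob {\<omega> \<in> space M. pivotal m q w (\<lambda>k. \<mu> k \<omega>) a} =
      prob {\<omega> \<in> space M. inj_on (\<lambda>k. \<mu> k \<omega>) N \<and> below N (\<lambda>k. \<mu> k \<omega>) a \<in> swings m q w a}"
    using pivotal_iff_swings[OF w Q0 Q1] a N by (intro arg_cong[where f=prob]) auto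
  also have "\<dots> = (\<Sum>S\<in>swings m q w a. below_prob a S)"
    by (rule prob_below_in[OF a]) (simp add: swings_def)
  also have "\<dots> = (\<Sum>S\<in>swings m q w a. 1 / (real m * real ((m - 1) choose card S)))"
    using below_prob_value[OF a] N by (intro sum.cong) (auto simp: swings_def)
  also have "\<dots> = shapley m (wvg m q w) a"
    using shapley_wvg[OF w] a N by simp
  finally show ?thesis .
qed

lemma pivot_prob_tendsto:
  assumes N: "N = {1..m}" and \<epsilon>: "\<And>k. k \<in> N \<Longrightarrow> \<epsilon> k \<in> borel_measurable M"
    and w: "\<forall>k\<in>{1..m}. 0 \<le> w k"
    and Q0: "0 \<le> quota m q w" and Q1: "quota m q w < (\<Sum>k=1..m. w k)" and a: "a \<in> N"
  shows "((\<lambda>t. pivot_prob M m q w \<mu> \<epsilon> t a) \<longlongrightarrow> shapley m (wvg m q w) a) at_top"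
proof -
  have event: "{\<omega> \<in> space M. pivotal m q w (\<lambda>k. Y k \<omega>) a} \<in> events"
    if Y: "\<And>k. k \<in> {1..m} \<Longrightarrow> Y k \<in> borel_measurable M" for Y
  proof -
    have "(\<lambda>\<omega>. \<lambda>k\<in>{1..m}. Y k \<omega>) \<in> measurable M (\<Pi>\<^sub>M k\<in>{1..m}. borel)"
      using Y by (intro measurable_restrict)
    from measurable_compose[OF this measurable_pivotal[OF w Q0 Q1, of a]]
    have "{\<omega> \<in> space M. pivotal m q w (\<lambda>k\<in>{1..m}. Y k \<omega>) a} \<in> events"
      by (simp add: pred_def)
    moreover have "pivotal m q w (\<lambda>k\<in>{1..m}. Y k \<omega>) a \<longleftrightarrow> pivotal m q w (\<lambda>k. Y k \<omega>) a" for \<omega>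
      by (intro pivotal_order_invariant[OF w Q0 Q1]) auto
    ultimately show ?thesis by simp
  qed
  have "AE \<omega> in M. \<forall>\<^sub>F t in at_top.
      pivotal m q w (\<lambda>k. t * \<mu> k \<omega> + \<epsilon> k \<omega>) a \<longleftrightarrow> pivotal m q w (\<lambda>k. \<mu> k \<omega>) a"
    using AE_no_ties
  proof eventually_elim
    case (elim \<omega>)
    from eventually_same_order[OF finite_N this, of "\<lambda>k. \<epsilon> k \<omega>"]
    show ?case
    proof eventually_elim
      case (elim t)
      then show ?case unfolding N by (rule pivotal_order_invariant[OF w Q0 Q1])
    qed
  qed
  then have "((\<lambda>t. pivot_prob M m q w \<mu> \<epsilon> t a) \<longlongrightarrow>
      prob {\<omega> \<in> space M. pivotal m q w (\<lambda>k. \<mu> k \<omega>) a}) at_top"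
    unfolding pivot_prob_def using \<epsilon> N
    by (intro prob_tendsto_eventually_equal event) auto
  then show ?thesis using prob_pivotal[OF N w Q0 Q1 a] by simp
qed

end

theorem theorem2:
  fixes M :: "'a measure" and m :: nat and q :: real and w :: "nat \<Rightarrow> real"
    and \<mu> \<epsilon> :: "nat \<Rightarrow> 'a \<Rightarrow> real" and f :: "real \<Rightarrow> ennreal" and i j :: nat
  assumes "prob_space M"
    and "1/2 \<le> q" and "q < 1"
    and "\<And>k. k \<in> {1..m} \<Longrightarrow> w k \<ge> 0" and "(\<Sum>k=1..m. w k) > 0"
    and "prob_space.indep_vars M (\<lambda>_. borel) (case_sum \<mu> \<epsilon>) ({1..m} <+> {1..m})"
    and "\<And>k. k \<in> {1..m} \<Longrightarrow> integrable M (\<epsilon> k)"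
    and "\<And>k. k \<in> {1..m} \<Longrightarrow> integrable M (\<lambda>\<omega>. (\<epsilon> k \<omega>)\<^sup>2)"
    and "\<And>k. k \<in> {1..m} \<Longrightarrow> distributed M lborel (\<mu> k) f"
    and "\<exists>B. \<forall>x. f x \<le> ennreal B"
    and "i \<in> {1..m}" and "j \<in> {1..m}"
    and "shapley m (wvg m q w) j > 0"
  shows "((\<lambda>t. pivot_prob M m q w \<mu> \<epsilon> t i / pivot_prob M m q w \<mu> \<epsilon> t j)
           \<longlongrightarrow> shapley m (wvg m q w) i / shapley m (wvg m q w) j) at_top"
proof -
  interpret prob_space M by fact
  let ?N = "{1..m::nat}"
  have w: "\<forall>k\<in>?N. 0 \<le> w k" using assms(4) by simp
  have Q0: "0 \<le> quota m q w" and Q1: "quota m q w < (\<Sum>k=1..m. w k)"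
    using assms(2,3,5) by (simp_all add: quota_def)
  note joint = assms(6)
  have "indep_vars (\<lambda>_. borel) (\<lambda>k. case_sum \<mu> \<epsilon> (Inl k)) ?N"
    by (rule indep_vars_reindex[OF joint]) auto
  then have "iid_continuous M ?N \<mu> f"
    using assms(9,11) by unfold_locales auto
  moreover have "\<epsilon> k \<in> borel_measurable M" if "k \<in> ?N" for k
  proof -
    have "Inr k \<in> ?N <+> ?N" using that by auto
    with joint have "random_variable borel (case_sum \<mu> \<epsilon> (Inr k))"
      unfolding indep_vars_def2 by blast
    then show ?thesis by simp
  qed
  ultimately have "((\<lambda>t. pivot_prob M m q w \<mu> \<epsilon> t a) \<longlongrightarrow> shapley m (wvg m q w) a) at_top"
    if "a \<in> ?N" for a
    using iid_continuous.pivot_prob_tendsto[OF _ refl _ w Q0 Q1 that] by blast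
  from tendsto_divide[OF this[OF assms(11)] this[OF assms(12)]]
  show ?thesis using assms(13) by simp
qed

end
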